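(* For every $t\ge2$ and $\sigma\in S_t$, the pattern set $\{(\sigma,[t-2])\}$ (the vincular pattern $\sigma_1\cdots\sigma_{t-1}\text{-}\sigma_t$) admits a finite enumeration scheme of depth $t-1$ in which every reversibly deletable set $R_p$ is either $\emptyset$ or $\{1\}$.
   Context: Vincular pattern $(\sigma,X)$, $\sigma\in S_\ell$, $X\subseteq[\ell-1]$: $\pi$ contains it if some subsequence $\pi_{i_1}\cdots\pi_{i_\ell}$ ($i_1<\dots<i_\ell$) is order-isomorphic to $\sigma$ with $i_{x+1}=i_x+1$ for $x\in X$. For $p\in S_k$ and $w\in[n]^k$ with distinct letters order-isomorphic to $p$, $S_n^B(p;w)$ is the set of $B$-avoiding $\pi\in S_n$ with $\pi_i=w_i$ ($i\le k$). Spacing vector $\vec g(n,w)$: $i$-th component $c_i-c_{i-1}-1$, $c_i$ the $i$-th smallest letter of $w$, $c_0=0,c_{k+1}=n+1$. $\vec v\in\mathbb{N}^{k+1}$ is a gap vector for $p$ w.r.t. $B$ if $S_n^B(p;w)=\emptyset$ whenever $\vec g(n,w)\ge\vec v$ componentwise. $d_R$ deletes the entries in positions $R$ and reduces (for words: subtract from each remaining letter the number of deleted letters smaller than it). $R\subseteq[k]$ is reversibly deletable for $p$ w.r.t. $B$ if, for every $n$ and $w$ with $S_n^B(p;w)\ne\emptyset$, $d_R$ is a bijection $S_n^B(p;w)\to S_{n-|R|}^B(d_R(p);d_R(w))$. A child of $p\in S_k$ is any $p'\in S_{k+1}$ with $p'_1\cdots p'_k$ order-isomorphic to $p$. An enumeration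 scheme for $B$ is a set $E$ of triples $(p,G_p,R_p)$, $p$ a permutation, $G_p$ a set of gap vectors for $p$ w.r.t. $B$, $R_p$ a reversibly deletable set for $p$ w.r.t. $B$, such that: $(\epsilon,\emptyset,\emptyset)\in E$ ($\epsilon$ the empty permutation); if $(p,G_p,R_p)\in E$ with $R_p=\emptyset$ and $\vec 0\notin G_p$ then every child of $p$ occurs as the first entry of a triple in $E$; if $R_p\ne\emptyset$ then $d_{R_p}(p)$ occurs as the first entry of a triple in $E$. Its depth is the maximum length of a $p$ occurring in $E$. *)

theory Defs
  imports Main
begin

text \<open>Permutations and words are lists of natural numbers with
values in 1..n. Positions in the paper are 1-based; list indices are 0-based,
so the paper's entry in position i is the list element at index i-1.\<close>

definition perm_of :: "nat \<Rightarrow> nat list \<Rightarrow> bool" where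
  "perm_of n p \<longleftrightarrow> distinct p \<and> set p = {1..n}"

definition order_iso :: "nat list \<Rightarrow> nat list \<Rightarrow> bool" where
  "order_iso u v \<longleftrightarrow> length u = length v \<and>
     (\<forall>i<length u. \<forall>j<length u. (u!i < u!j) = (v!i < v!j))"

text \<open>A vincular pattern is a pair (sigma, X) with X a set of 1-based indices in [l-1].
pi contains it if there are indices i_1<...<i_l (here idx!0 < ... < idx!(l-1))
with pi restricted to them order-isomorphic to sigma and i_{x+1} = i_x + 1 for x in X.\<close>

definition contains :: "nat list \<Rightarrow> nat list \<times> nat set \<Rightarrow> bool" where
  "contains \<pi> pat \<longleftrightarrow> (case pat of (\<sigma>, X) \<Rightarrow>
     (\<exists>idx :: nat list. length idx = length \<sigma> \<and> sorted_wrt (<) idx \<and>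
        (\<forall>i\<in>set idx. i < length \<pi>) \<and>
        order_iso (map (\<lambda>i. \<pi>!i) idx) \<sigma> \<and>
        (\<forall>x\<in>X. 1 \<le> x \<and> x < length \<sigma> \<longrightarrow> idx!x = idx!(x-1) + 1)))"

definition avoids :: "nat list \<Rightarrow> (nat list \<times> nat set) set \<Rightarrow> bool" where
  "avoids \<pi> B \<longleftrightarrow> (\<forall>b\<in>B. \<not> contains \<pi> b)"

definition S_B :: "(nat list \<times> nat set) set \<Rightarrow> nat \<Rightarrow> nat list \<Rightarrow> nat list \<Rightarrow> nat list set" where
  "S_B B n p w = {\<pi>. perm_of n \<pi> \<and> avoids \<pi> B \<and> order_iso w p \<and> take (length p) \<pi> = w}"

definition gap_vec :: "nat \<Rightarrow> nat list \<Rightarrow> nat list" where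
  "gap_vec n w = map2 (\<lambda>a b. b - a - 1) (0 # sort w) (sort w @ [n + 1])"

definition is_gap_vector :: "(nat list \<times> nat set) set \<Rightarrow> nat list \<Rightarrow> nat list \<Rightarrow> bool" where
  "is_gap_vector B p v \<longleftrightarrow> length v = length p + 1 \<and>
     (\<forall>n w. list_all2 (\<le>) v (gap_vec n w) \<longrightarrow> S_B B n p w = {})"

text \<open>d_R: delete the entries in (1-based) positions R and reduce.\<close>

definition del_red :: "nat set \<Rightarrow> nat list \<Rightarrow> nat list" where
  "del_red R u = map (\<lambda>a. a - card {b \<in> set (nths u {i. Suc i \<in> R}). b < a})
                     (nths u {i. Suc i \<notin> R})"

definition rev_deletable :: "(nat list \<times> nat set) set \<Rightarrow> nat list \<Rightarrow> nat set \<Rightarrow> bool" where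
  "rev_deletable B p R \<longleftrightarrow> R \<subseteq> {1..length p} \<and>
     (\<forall>n w. S_B B n p w \<noteq> {} \<longrightarrow>
        bij_betw (del_red R) (S_B B n p w) (S_B B (n - card R) (del_red R p) (del_red R w)))"

definition is_child :: "nat list \<Rightarrow> nat list \<Rightarrow> bool" where
  "is_child p p' \<longleftrightarrow> perm_of (length p + 1) p' \<and> order_iso (take (length p) p') p"

definition enum_scheme ::
  "(nat list \<times> nat set) set \<Rightarrow> (nat list \<times> nat list set \<times> nat set) set \<Rightarrow> bool" where
  "enum_scheme B E \<longleftrightarrow>
     (\<forall>(p, G, R)\<in>E. perm_of (length p) p \<and> (\<forall>v\<in>G. is_gap_vector B p v) \<and> rev_deletable B p R) \<and>
     ([], {}, {}) \<in> E \<and>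
     (\<forall>(p, G, R)\<in>E. R = {} \<and> replicate (length p + 1) 0 \<notin> G \<longrightarrow>
        (\<forall>p'. is_child p p' \<longrightarrow> (\<exists>G' R'. (p', G', R') \<in> E))) \<and>
     (\<forall>(p, G, R)\<in>E. R \<noteq> {} \<longrightarrow> (\<exists>G' R'. (del_red R p, G', R') \<in> E))"

definition scheme_depth :: "(nat list \<times> nat list set \<times> nat set) set \<Rightarrow> nat" where
  "scheme_depth E = Max ((\<lambda>(p, G, R). length p) ` E)"

end

theory Submission
  imports Defs
begin

(* Let B = {(sigma, X)} with X = {1..t-2}: an occurrence of B consists of t-1 adjacent
   entries followed by one further entry.  The scheme used is
     E = { (p, {}, R_p) | p a permutation of length at most t-1 },
   where R_p = {1} if |p| = t-1 and R_p = {} otherwise.  It contains the empty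
   permutation, is closed under children below length t-1, and deleting the first entry
   of a permutation of length t-1 gives a permutation of length t-2, again in E.

   The mathematical content is that {1} is reversibly deletable for every p of length
   t-1.  Deleting the first entry x of pi and reducing is inverted by re-inserting x, and
   occurrences not using the first position correspond on both sides.  An occurrence that
   does use the first position must consist of the whole prefix w = pi_1 ... pi_{t-1}
   plus one later letter v.  Every permutation of [n] with prefix w has v somewhere after
   that prefix, so it contains B as well; hence if S_n^B(p;w) is nonempty, re-insertion
   never creates an occurrence. *)

section \<open>Deleting and re-inserting one value\<close>

definition dn :: "nat \<Rightarrow> nat \<Rightarrow> nat" where "dn x a = (if x < a then a - 1 else a)"
definition up :: "nat \<Rightarrow> nat \<Rightarrow> nat" where "up x a = (if x \<le> a then a + 1 else a)"

lemma up_dn [simp]: "a \<noteq> x \<Longrightarrow> up x (dn x a) = a"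
  by (auto simp: up_def dn_def)

lemma dn_up [simp]: "dn x (up x b) = b"
  by (auto simp: up_def dn_def)

lemma dn_less: "a \<noteq> x \<Longrightarrow> b \<noteq> x \<Longrightarrow> (dn x a < dn x b) = (a < b)"
  by (auto simp: dn_def)

lemma del_red_first [simp]: "del_red {Suc 0} (x # l) = map (dn x) l"
proof -
  have deleted: "nths (x # l) {i. Suc i \<in> {Suc 0}} = [x]" by (simp add: nths_Cons)
  have kept: "nths (x # l) {i. Suc i \<notin> {Suc 0}} = l" by (simp add: nths_Cons nths_all)
  have "card {b \<in> set [x]. b < a} = (if x < a then 1 else 0)" for a
    by (cases "x < a") (auto simp: Collect_conv_if)
  then show ?thesis unfolding del_red_def deleted kept by (auto simp: dn_def)
qed

lemma del_red_empty [simp]: "del_red {} u = u"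
  unfolding del_red_def by (simp add: nths_all)

lemma perm_length: "perm_of n p \<Longrightarrow> length p = n"
  unfolding perm_of_def by (metis card_atLeastAtMost diff_Suc_1 distinct_card)

lemma perm_dn:
  assumes "perm_of n (x # l)"
  shows "perm_of (n - 1) (map (dn x) l)"
proof -
  have d: "distinct l" "x \<notin> set l" and s: "set l = {1..n} - {x}" "x \<in> {1..n}"
    using assms by (auto simp: perm_of_def)
  have inj: "inj_on (dn x) (set l)"
    by (rule inj_onI) (metis d(2) up_dn)
  have "dn x ` ({1..n} - {x}) = {1..n - 1}"
  proof
    show "dn x ` ({1..n} - {x}) \<subseteq> {1..n - 1}" using s(2) by (auto simp: dn_def)
    show "{1..n - 1} \<subseteq> dn x ` ({1..n} - {x})"
    proof
      fix b assume "b \<in> {1..n - 1}"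
      then have "up x b \<in> {1..n} - {x}" using s(2) by (auto simp: up_def)
      then show "b \<in> dn x ` ({1..n} - {x})" by (metis dn_up image_eqI)
    qed
  qed
  then show ?thesis using d inj s unfolding perm_of_def by (simp add: distinct_map)
qed

lemma perm_up:
  assumes "perm_of (n - 1) l" "x \<in> {1..n}"
  shows "perm_of n (x # map (up x) l)"
proof -
  have inj: "inj_on (up x) (set l)"
    by (rule inj_onI) (metis dn_up)
  have "up x ` {1..n - 1} = {1..n} - {x}"
  proof
    show "up x ` {1..n - 1} \<subseteq> {1..n} - {x}" using assms(2) by (auto simp: up_def)
    show "{1..n} - {x} \<subseteq> up x ` {1..n - 1}"
    proof
      fix b assume "b \<in> {1..n} - {x}"
      then have "dn x b \<in> {1..n - 1}" "up x (dn x b) = b" using assms(2) by (auto simp: dn_def up_def)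
      then show "b \<in> up x ` {1..n - 1}" by (metis image_eqI)
    qed
  qed
  then show ?thesis using inj assms unfolding perm_of_def by (auto simp: distinct_map)
qed

lemma order_iso_map:
  assumes "\<forall>a\<in>set u. \<forall>b\<in>set u. (g a < g b) = (a < b)"
  shows "order_iso (map g u) v = order_iso u v"
  using assms unfolding order_iso_def by auto

lemma order_iso_dn:
  assumes "order_iso (x # w) (y # p)" "distinct (x # w)" "distinct (y # p)"
  shows "order_iso (map (dn x) w) (map (dn y) p)"
proof -
  have "length w = length p" using assms(1) by (simp add: order_iso_def)
  moreover have "(w ! i < w ! j) = (p ! i < p ! j)" if "i < length w" "j < length w" for i j
    using assms(1) that unfolding order_iso_def
    by (metis Suc_less_eq length_Cons nth_Cons_Suc)
  moreover have "(dn x (w ! i) < dn x (w ! j)) = (w ! i < w ! j)" if "i < length w" "j < length w" for i j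
    using assms(2) that by (metis dn_less distinct.simps(2) nth_mem)
  moreover have "(dn y (p ! i) < dn y (p ! j)) = (p ! i < p ! j)" if "i < length p" "j < length p" for i j
    using assms(3) that by (metis dn_less distinct.simps(2) nth_mem)
  ultimately show ?thesis unfolding order_iso_def by auto
qed

section \<open>Occurrences of a vincular pattern\<close>

definition occ :: "nat list \<Rightarrow> nat list \<Rightarrow> nat set \<Rightarrow> nat list \<Rightarrow> bool" where
  "occ \<pi> \<sigma> X idx \<longleftrightarrow> length idx = length \<sigma> \<and> sorted_wrt (<) idx \<and>
        (\<forall>i\<in>set idx. i < length \<pi>) \<and>
        order_iso (map (\<lambda>i. \<pi> ! i) idx) \<sigma> \<and>
        (\<forall>x\<in>X. 1 \<le> x \<and> x < length \<sigma> \<longrightarrow> idx ! x = idx ! (x - 1) + 1)"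

lemma contains_occ: "contains \<pi> (\<sigma>, X) = (\<exists>idx. occ \<pi> \<sigma> X idx)"
  by (simp add: contains_def occ_def)

lemma avoids_single: "avoids \<pi> {(\<sigma>, X)} = (\<not> contains \<pi> (\<sigma>, X))"
  by (simp add: avoids_def)

lemma occ_shift:
  assumes "x \<notin> set l"
  shows "occ (map (dn x) l) \<sigma> X idx = occ (x # l) \<sigma> X (map Suc idx)"
proof -
  have letters: "order_iso (map (\<lambda>i. map (dn x) l ! i) idx) \<sigma> =
      order_iso (map (\<lambda>i. (x # l) ! i) (map Suc idx)) \<sigma>"
    if "\<forall>i\<in>set idx. i < length l"
  proof -
    have entries: "map (\<lambda>i. map (dn x) l ! i) idx = map (dn x) (map (\<lambda>i. l ! i) idx)"
      using that by auto
    have "order_iso (map (dn x) (map (\<lambda>i. l ! i) idx)) \<sigma> = order_iso (map (\<lambda>i. l ! i) idx) \<sigma>"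
      using that assms by (intro order_iso_map) (auto intro!: dn_less)
    moreover have "map (\<lambda>i. (x # l) ! i) (map Suc idx) = map (\<lambda>i. l ! i) idx" by simp
    ultimately show ?thesis by (simp only: entries)
  qed
  have adjacent: "(\<forall>y\<in>X. 1 \<le> y \<and> y < length \<sigma> \<longrightarrow> idx ! y = idx ! (y - 1) + 1) =
      (\<forall>y\<in>X. 1 \<le> y \<and> y < length \<sigma> \<longrightarrow> map Suc idx ! y = map Suc idx ! (y - 1) + 1)"
    if "length idx = length \<sigma>"
    using that by auto
  show ?thesis unfolding occ_def using letters adjacent by (auto simp: sorted_wrt_map)
qed

lemma occ_at_start:
  assumes "length \<sigma> = t" "t \<ge> 2" "occ \<pi> \<sigma> {1..t-2} idx" "idx ! 0 = 0"
  obtains j where "idx = [0..<t-1] @ [j]" "t - 1 \<le> j" "j < length \<pi>"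
proof -
  have len: "length idx = t" and sorted: "sorted_wrt (<) idx"
    and bound: "\<forall>i\<in>set idx. i < length \<pi>"
    and adj: "\<forall>y\<in>{1..t-2}. y < t \<longrightarrow> idx ! y = idx ! (y - 1) + 1"
    using assms by (auto simp: occ_def)
  have block: "idx ! i = i" if "i \<le> t - 2" for i
    using that
  proof (induction i)
    case 0 then show ?case using assms(4) by simp
  next
    case (Suc i) then show ?case using adj by auto
  qed
  have "take (t - 1) idx = [0..<t-1]"
    using len block by (intro nth_equalityI) auto
  moreover have "drop (t - 1) idx = [idx ! (t - 1)]"
    using len assms(2) Cons_nth_drop_Suc[of "t - 1" idx] by simp
  ultimately have "idx = [0..<t-1] @ [idx ! (t - 1)]"
    by (metis append_take_drop_id)
  moreover have "idx ! (t - 2) < idx ! (t - 1)"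
    using sorted len assms(2) by (simp add: sorted_wrt_iff_nth_less)
  then have "t - 1 \<le> idx ! (t - 1)" using block[of "t - 2"] by simp
  moreover have "idx ! (t - 1) < length \<pi>" using bound len assms(2) by simp
  ultimately show ?thesis using that by blast
qed

lemma occ_block_last:
  assumes "length \<sigma> = t" "t \<ge> 2" "t - 1 \<le> j" "j < length \<pi>"
  shows "occ \<pi> \<sigma> {1..t-2} ([0..<t-1] @ [j]) \<longleftrightarrow> order_iso (take (t - 1) \<pi> @ [\<pi> ! j]) \<sigma>"
proof -
  have "map (\<lambda>i. \<pi> ! i) [0..<t-1] = take (t - 1) \<pi>"
    using assms by (intro nth_equalityI) auto
  moreover have "([0..<t-1] @ [j]) ! y = ([0..<t-1] @ [j]) ! (y - 1) + 1"
    if "y \<in> {1..t-2}" for y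
  proof -
    have "y < t - 1" "y - 1 < t - 1" using that by auto
    then show ?thesis using that by (simp add: nth_append)
  qed
  ultimately show ?thesis
    using assms unfolding occ_def by (auto simp: sorted_wrt_append)
qed

text \<open>The key observation: an occurrence starting at the first position is determined by
  the first t-1 entries and one letter after them.  All permutations of [n] with the same
  prefix have the same letters after it, so such an occurrence transfers to each of them.\<close>

lemma start_occurrence_transfers:
  assumes \<sigma>: "length \<sigma> = t" "t \<ge> 2"
    and perms: "perm_of n \<pi>" "perm_of n \<pi>0"
    and prefix: "take (t - 1) \<pi> = take (t - 1) \<pi>0"
    and o: "occ \<pi> \<sigma> {1..t-2} idx" "idx ! 0 = 0"
  shows "contains \<pi>0 (\<sigma>, {1..t-2})"
proof -
  obtain j where idx: "idx = [0..<t-1] @ [j]" and j: "t - 1 \<le> j" "j < length \<pi>"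
    using occ_at_start[OF \<sigma> o] .
  have "\<pi> ! j \<notin> set (take (t - 1) \<pi>)"
    using perms(1) j by (auto simp: perm_of_def in_set_conv_nth nth_eq_iff_index_eq)
  moreover have "\<pi> ! j \<in> set \<pi>0"
    using perms j by (metis nth_mem perm_of_def)
  ultimately have "\<pi> ! j \<in> set (drop (t - 1) \<pi>0)"
    using prefix by (metis Un_iff append_take_drop_id set_append)
  then obtain k where k: "k < length (drop (t - 1) \<pi>0)" "drop (t - 1) \<pi>0 ! k = \<pi> ! j"
    by (metis in_set_conv_nth)
  have "order_iso (take (t - 1) \<pi>0 @ [\<pi>0 ! (t - 1 + k)]) \<sigma>"
    using occ_block_last[OF \<sigma> j] o idx prefix k by simp
  then have "occ \<pi>0 \<sigma> {1..t-2} ([0..<t-1] @ [t - 1 + k])"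
    using occ_block_last[OF \<sigma>, of "t - 1 + k" \<pi>0] k by simp
  then show ?thesis by (auto simp: contains_occ)
qed

lemma avoids_Cons_iff:
  assumes \<sigma>: "length \<sigma> = t" "t \<ge> 2"
    and perms: "perm_of n (x # l)" "perm_of n \<pi>0"
    and prefix: "take (t - 1) (x # l) = take (t - 1) \<pi>0"
    and avoid: "\<not> contains \<pi>0 (\<sigma>, {1..t-2})"
  shows "contains (x # l) (\<sigma>, {1..t-2}) \<longleftrightarrow> contains (map (dn x) l) (\<sigma>, {1..t-2})"
proof -
  have x: "x \<notin> set l" using perms(1) by (simp add: perm_of_def)
  show ?thesis
  proof
    assume "contains (x # l) (\<sigma>, {1..t-2})"
    then obtain idx where o: "occ (x # l) \<sigma> {1..t-2} idx" by (auto simp: contains_occ)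
    have "idx ! 0 \<noteq> 0"
      using start_occurrence_transfers[OF \<sigma> perms prefix o] avoid by blast
    moreover have "sorted idx" using o by (simp add: occ_def strict_sorted_imp_sorted)
    ultimately have "0 \<notin> set idx"
      by (metis in_set_conv_nth le_zero_eq sorted_nth_mono zero_le)
    then have "idx = map Suc (map (\<lambda>i. i - 1) idx)"
      by (induction idx) auto
    then show "contains (map (dn x) l) (\<sigma>, {1..t-2})"
      using o occ_shift[OF x] by (metis contains_occ)
  next
    assume "contains (map (dn x) l) (\<sigma>, {1..t-2})"
    then show "contains (x # l) (\<sigma>, {1..t-2})"
      using occ_shift[OF x] by (auto simp: contains_occ)
  qed
qed

section \<open>Reversibly deletable sets\<close>

lemma empty_rev_deletable: "rev_deletable B p {}"
proof -
  have "del_red {} = id" by (rule ext) simp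
  then show ?thesis unfolding rev_deletable_def by simp
qed

lemma del_first_bij:
  assumes \<sigma>: "length \<sigma> = t" "t \<ge> 2"
    and \<pi>0: "perm_of n \<pi>0" "\<not> contains \<pi>0 (\<sigma>, {1..t-2})" "take (t - 1) \<pi>0 = x # w'"
  shows "bij_betw (del_red {1})
      {a. perm_of n a \<and> \<not> contains a (\<sigma>, {1..t-2}) \<and> take (t - 1) a = x # w'}
      {b. perm_of (n - 1) b \<and> \<not> contains b (\<sigma>, {1..t-2}) \<and> take (t - 2) b = map (dn x) w'}"
proof -
  have take_Cons: "take (t - 1) (z # l) = z # take (t - 2) l" for z :: nat and l
  proof -
    have "t - 1 = Suc (t - 2)" using \<sigma>(2) by simp
    then show ?thesis by simp
  qed
  have x: "x \<in> {1..n}"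
    using \<pi>0(1,3) by (metis in_set_takeD list.set_intros(1) perm_of_def)
  have x_w': "x \<notin> set w'"
    using \<pi>0(1,3) by (metis distinct.simps(2) distinct_take perm_of_def)
  have avoid_iff: "contains (x # l) (\<sigma>, {1..t-2}) \<longleftrightarrow> contains (map (dn x) l) (\<sigma>, {1..t-2})"
    if "perm_of n (x # l)" "take (t - 2) l = w'" for l
    using avoids_Cons_iff[OF \<sigma> that(1) \<pi>0(1) _ \<pi>0(2)] that(2) \<pi>0(3) take_Cons by simp
  have forward: "perm_of (n - 1) (del_red {1} a) \<and> \<not> contains (del_red {1} a) (\<sigma>, {1..t-2}) \<and>
      take (t - 2) (del_red {1} a) = map (dn x) w' \<and> x # map (up x) (del_red {1} a) = a"
    if a: "perm_of n a" "\<not> contains a (\<sigma>, {1..t-2})" "take (t - 1) a = x # w'" for a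
  proof -
    obtain l where l: "a = x # l" "take (t - 2) l = w'"
      using a(3) take_Cons by (cases a) auto
    have "x \<notin> set l" using a(1) l by (simp add: perm_of_def)
    then show ?thesis
      using l a perm_dn avoid_iff by (auto simp: take_map intro!: map_idI up_dn)
  qed
  have backward: "perm_of n (x # map (up x) b) \<and> \<not> contains (x # map (up x) b) (\<sigma>, {1..t-2}) \<and>
      take (t - 1) (x # map (up x) b) = x # w' \<and> del_red {1} (x # map (up x) b) = b"
    if b: "perm_of (n - 1) b" "\<not> contains b (\<sigma>, {1..t-2})" "take (t - 2) b = map (dn x) w'" for b
  proof -
    have a: "perm_of n (x # map (up x) b)" using perm_up[OF b(1) x] .
    have prefix: "take (t - 2) (map (up x) b) = w'"
      using b(3) x_w' by (auto simp: take_map intro!: map_idI up_dn)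
    show ?thesis
      using avoid_iff[OF a prefix] a prefix b(2) take_Cons by (simp add: comp_def map_idI)
  qed
  show ?thesis
    by (rule bij_betw_byWitness[where f' = "\<lambda>b. x # map (up x) b"]) (use forward backward in auto)
qed

lemma first_entry_rev_deletable:
  assumes \<sigma>: "length \<sigma> = t" "t \<ge> 2" and p: "perm_of (t - 1) p"
  shows "rev_deletable {(\<sigma>, {1..t-2})} p {1}"
  unfolding rev_deletable_def
proof (intro conjI allI impI)
  let ?B = "{(\<sigma>, {1..t-2})}"
  show "{1} \<subseteq> {1..length p}" using p \<sigma> by (auto simp: perm_length)
  fix n w
  assume "S_B ?B n p w \<noteq> {}"
  then obtain \<pi>0 where \<pi>0: "perm_of n \<pi>0" "\<not> contains \<pi>0 (\<sigma>, {1..t-2})"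
      and wp: "order_iso w p" and prefix0: "take (t - 1) \<pi>0 = w"
    using p by (auto simp: S_B_def avoids_single perm_length)
  have lp: "length p = t - 1" using p by (simp add: perm_length)
  then obtain y p' where py: "p = y # p'" and lp': "length p' = t - 2" using \<sigma> by (cases p) auto
  have "length w = t - 1" using wp lp by (simp add: order_iso_def)
  then obtain x w' where wx: "w = x # w'" using \<sigma> by (cases w) auto
  have dw: "distinct w" using \<pi>0(1) prefix0 by (metis distinct_take perm_of_def)
  have source: "S_B ?B n p w =
      {a. perm_of n a \<and> \<not> contains a (\<sigma>, {1..t-2}) \<and> take (t - 1) a = x # w'}"
    using wp lp wx by (auto simp: S_B_def avoids_single)
  have target: "S_B ?B (n - card {1::nat}) (del_red {1} p) (del_red {1} w) =
      {b. perm_of (n - 1) b \<and> \<not> contains b (\<sigma>, {1..t-2}) \<and> take (t - 2) b = map (dn x) w'}"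
    using order_iso_dn[of x w' y p'] wp dw p py wx lp'
    by (auto simp: S_B_def avoids_single perm_of_def take_map)
  show "bij_betw (del_red {1}) (S_B ?B n p w) (S_B ?B (n - card {1::nat}) (del_red {1} p) (del_red {1} w))"
    unfolding source target using del_first_bij[OF \<sigma> \<pi>0(1,2)] prefix0 wx by simp
qed

section \<open>The enumeration scheme\<close>

definition perms_upto :: "nat \<Rightarrow> nat list set" where
  "perms_upto m = {p. perm_of (length p) p \<and> length p \<le> m}"

definition first_entry_scheme :: "nat \<Rightarrow> (nat list \<times> nat list set \<times> nat set) set" where
  "first_entry_scheme m = (\<lambda>p. (p, {}, if length p = m then {1} else {})) ` perms_upto m"

lemma finite_perms_upto: "finite (perms_upto m)"
proof (rule finite_subset)
  show "perms_upto m \<subseteq> {p. set p \<subseteq> {1..m} \<and> length p \<le> m}"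
    unfolding perms_upto_def perm_of_def by auto
  show "finite {p. set p \<subseteq> {1..m} \<and> length p \<le> m}"
    by (rule finite_lists_length_le) simp
qed

lemma child_in_perms_upto:
  assumes "p \<in> perms_upto m" "length p \<noteq> m" "is_child p p'"
  shows "p' \<in> perms_upto m"
  using assms perm_length[of "length p + 1" p']
  by (auto simp: perms_upto_def is_child_def)

lemma del_first_in_perms_upto:
  assumes "p \<in> perms_upto m" "p \<noteq> []"
  shows "del_red {1} p \<in> perms_upto m"
proof -
  obtain y p' where "p = y # p'" using assms(2) by (cases p) auto
  then show ?thesis using assms(1) perm_dn[of "length p" y p'] by (auto simp: perms_upto_def)
qed

lemma first_entry_scheme_depth:
  "scheme_depth (first_entry_scheme m) = m"
  unfolding scheme_depth_def
proof (rule Max_eqI)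
  show "finite ((\<lambda>(p, G, R). length p) ` first_entry_scheme m)"
    using finite_perms_upto by (simp add: first_entry_scheme_def)
  show "l \<le> m" if "l \<in> (\<lambda>(p, G, R). length p) ` first_entry_scheme m" for l
    using that by (auto simp: first_entry_scheme_def perms_upto_def)
  have "set [1..<m+1] = {1..m}" by auto
  then have "[1..<m+1] \<in> perms_upto m" by (simp add: perms_upto_def perm_of_def)
  then show "m \<in> (\<lambda>(p, G, R). length p) ` first_entry_scheme m"
    unfolding first_entry_scheme_def by force
qed

lemma first_entry_scheme_member:
  "(p, G, R) \<in> first_entry_scheme m \<longleftrightarrow>
     p \<in> perms_upto m \<and> G = {} \<and> R = (if length p = m then {1} else {})"
  by (auto simp: first_entry_scheme_def)

theorem first_entry_scheme_enum_scheme: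
  assumes \<sigma>: "length \<sigma> = t" "t \<ge> 2"
  shows "enum_scheme {(\<sigma>, {1..t-2})} (first_entry_scheme (t - 1))"
proof -
  let ?E = "first_entry_scheme (t - 1)" and ?B = "{(\<sigma>, {1..t-2})}"
  have valid: "\<forall>(p, G, R)\<in>?E. perm_of (length p) p \<and> (\<forall>v\<in>G. is_gap_vector ?B p v) \<and>
      rev_deletable ?B p R"
    using first_entry_rev_deletable[OF \<sigma>] empty_rev_deletable
    by (auto simp: first_entry_scheme_member perms_upto_def)
  have root: "([], {}, {}) \<in> ?E"
    using \<sigma>(2) by (simp add: first_entry_scheme_member perms_upto_def perm_of_def)
  have children: "\<forall>(p, G, R)\<in>?E. R = {} \<and> replicate (length p + 1) 0 \<notin> G \<longrightarrow>
      (\<forall>p'. is_child p p' \<longrightarrow> (\<exists>G' R'. (p', G', R') \<in> ?E))"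
    by (auto simp: first_entry_scheme_member split: if_splits intro: child_in_perms_upto)
  have deletion: "\<forall>(p, G, R)\<in>?E. R \<noteq> {} \<longrightarrow> (\<exists>G' R'. (del_red R p, G', R') \<in> ?E)"
  proof -
    have "del_red {1} p \<in> perms_upto (t - 1)" if "p \<in> perms_upto (t - 1)" "length p = t - 1" for p
    proof -
      have "p \<noteq> []" using that(2) \<sigma>(2) by auto
      then show ?thesis using del_first_in_perms_upto[OF that(1)] by simp
    qed
    then show ?thesis by (auto simp: first_entry_scheme_member split: if_splits)
  qed
  show ?thesis unfolding enum_scheme_def using valid root children deletion by blast
qed

theorem mainTheorem7:
  fixes t :: nat and \<sigma> :: "nat list"
  assumes "t \<ge> 2" and "perm_of t \<sigma>"
  shows "\<exists>E. finite E \<and> (\<forall>(p, G, R)\<in>E. finite G) \<and>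
           enum_scheme {(\<sigma>, {1..t-2})} E \<and> scheme_depth E = t - 1 \<and>
           (\<forall>(p, G, R)\<in>E. R = {} \<or> R = {1})"
proof (intro exI conjI)
  let ?E = "first_entry_scheme (t - 1)"
  show "finite ?E" using finite_perms_upto by (simp add: first_entry_scheme_def)
  show "\<forall>(p, G, R)\<in>?E. finite G" by (auto simp: first_entry_scheme_def)
  show "enum_scheme {(\<sigma>, {1..t-2})} ?E"
    using first_entry_scheme_enum_scheme assms perm_length by blast
  show "scheme_depth ?E = t - 1" by (rule first_entry_scheme_depth)
  show "\<forall>(p, G, R)\<in>?E. R = {} \<or> R = {1}" by (auto simp: first_entry_scheme_def)
qed

end
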